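(* Let $S$ be an investment strategy with parameter space $\mathbb W=\mathcal W_k^\ell$ satisfying conditions $(\mathrm L_\varepsilon)$ and $(\mathrm D_c)$, let $c'=\frac{2c}{\varepsilon}$, let $\sigma>0$, $\Gamma\ge2$, and $0<\nu\le2$. Define $\delta'_t(\nu)=\frac{\nu}{3\Gamma c'mt^4k\ell}$. Then there is $t_0$ (depending only on $\nu,c',m$) such that for all $t\ge t_0$, every market sequence, and all $\mathbf w,\mathbf w'\in\mathbb W$ with $|w_{ij}-w'_{ij}|\le\delta'_t(\nu)$ for all $1\le i\le\ell$, $1\le j\le k$: $(1+\nu)^{-1}F_t(\mathbf w)\le F_t(\mathbf w')\le(1+\nu)F_t(\mathbf w)$.
   Context: Let $m\ge2$ and $\mathbf x_0,\mathbf x_1,\dots\in(0,\infty)^m$ be return vectors. $\mathcal W_k=\{\mathbf w\in[0,1]^k:\sum_i w_i=1\}$. An investment strategy $S$ with parameter space $\mathbb W=\mathcal W_k^\ell$ (elements $\mathbf w=(\mathbf w_1,\dots,\mathbf w_\ell)$, $\mathbf w_i=(w_{i1},\dots,w_{ik})$) assigns to each $t\ge0$, $\mathbf w$ a description $S_t(\mathbf w)\in\mathcal W_m$; $\mathcal R_t(\mathbf w)=\prod_{s=0}^{t-1}S_s(\mathbf w)\cdot\mathbf x_s$. Damped return: $f_{ij}(\mathbf w)=e^{\Gamma\min(w_{ij}-\sigma,0)}$ and $F_t(\mathbf w)=\mathcal R_t(\mathbf w)\prod_{i=1}^\ell\prod_{j=1}^k f_{ij}(\mathbf w)$. Condition $(\mathrm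 L_\varepsilon)$: $S_{ti}(\mathbf w)\ge\frac{\varepsilon}{2m(t+1)^2}$ for all $t,i,\mathbf w$ (with fixed $\varepsilon\in(0,1)$). Condition $(\mathrm D_c)$: for all $t\ge0$, $1\le i\le m$, $\mathbf w,\mathbf w'\in\mathbb W$, $|S_{ti}(\mathbf w)-S_{ti}(\mathbf w')|\le c(t+1)\sum_{\iota=1}^\ell\sum_{j=1}^{k-1}|w_{\iota j}-w'_{\iota j}|$. *)

theory Defs
  imports Complex_Main
begin

text \<open>Vectors are functions on nat, relevant on indices 1..n.
  A parameter w in W_k^l is a function nat => nat => real, w i j = w_{ij}.\<close>

definition simplex :: "nat \<Rightarrow> (nat \<Rightarrow> real) \<Rightarrow> bool" where
  "simplex n v \<longleftrightarrow> (\<forall>i\<in>{1..n}. 0 \<le> v i \<and> v i \<le> 1) \<and> (\<Sum>i=1..n. v i) = 1"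

definition param_space :: "nat \<Rightarrow> nat \<Rightarrow> (nat \<Rightarrow> nat \<Rightarrow> real) set" where
  "param_space k l = {w. \<forall>i\<in>{1..l}. simplex k (w i)}"

definition strategy ::
  "nat \<Rightarrow> nat \<Rightarrow> nat \<Rightarrow> (nat \<Rightarrow> (nat \<Rightarrow> nat \<Rightarrow> real) \<Rightarrow> nat \<Rightarrow> real) \<Rightarrow> bool" where
  "strategy m k l S \<longleftrightarrow> (\<forall>t. \<forall>w\<in>param_space k l. simplex m (S t w))"

definition cond_L ::
  "nat \<Rightarrow> nat \<Rightarrow> nat \<Rightarrow> real \<Rightarrow> (nat \<Rightarrow> (nat \<Rightarrow> nat \<Rightarrow> real) \<Rightarrow> nat \<Rightarrow> real) \<Rightarrow> bool" where
  "cond_L m k l \<epsilon> S \<longleftrightarrow>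
     (\<forall>t. \<forall>i\<in>{1..m}. \<forall>w\<in>param_space k l.
        S t w i \<ge> \<epsilon> / (2 * real m * (real t + 1)^2))"

definition cond_D ::
  "nat \<Rightarrow> nat \<Rightarrow> nat \<Rightarrow> real \<Rightarrow> (nat \<Rightarrow> (nat \<Rightarrow> nat \<Rightarrow> real) \<Rightarrow> nat \<Rightarrow> real) \<Rightarrow> bool" where
  "cond_D m k l c S \<longleftrightarrow>
     (\<forall>t. \<forall>i\<in>{1..m}. \<forall>w\<in>param_space k l. \<forall>w'\<in>param_space k l.
        \<bar>S t w i - S t w' i\<bar>
          \<le> c * (real t + 1) * (\<Sum>\<iota>=1..l. \<Sum>j=1..k-1. \<bar>w \<iota> j - w' \<iota> j\<bar>))"

definition market :: "nat \<Rightarrow> (nat \<Rightarrow> nat \<Rightarrow> real) \<Rightarrow> bool" where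
  "market m x \<longleftrightarrow> (\<forall>s. \<forall>i\<in>{1..m}. x s i > 0)"

definition wealth ::
  "nat \<Rightarrow> (nat \<Rightarrow> (nat \<Rightarrow> nat \<Rightarrow> real) \<Rightarrow> nat \<Rightarrow> real) \<Rightarrow> (nat \<Rightarrow> nat \<Rightarrow> real)
     \<Rightarrow> nat \<Rightarrow> (nat \<Rightarrow> nat \<Rightarrow> real) \<Rightarrow> real" where
  "wealth m S x t w = (\<Prod>s<t. \<Sum>i=1..m. S s w i * x s i)"

definition damp :: "real \<Rightarrow> real \<Rightarrow> real \<Rightarrow> real" where
  "damp \<Gamma> \<sigma> a = exp (\<Gamma> * min (a - \<sigma>) 0)"

definition damped_wealth ::
  "nat \<Rightarrow> nat \<Rightarrow> nat \<Rightarrow> real \<Rightarrow> real \<Rightarrow> (nat \<Rightarrow> (nat \<Rightarrow> nat \<Rightarrow> real) \<Rightarrow> nat \<Rightarrow> real)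
     \<Rightarrow> (nat \<Rightarrow> nat \<Rightarrow> real) \<Rightarrow> nat \<Rightarrow> (nat \<Rightarrow> nat \<Rightarrow> real) \<Rightarrow> real" where
  "damped_wealth m k l \<Gamma> \<sigma> S x t w =
     wealth m S x t w * (\<Prod>i=1..l. \<Prod>j=1..k. damp \<Gamma> \<sigma> (w i j))"

end

theory Submission
  imports Defs
begin

(* Write D for the l1-distance of w and w' over the coordinates j < k that condition (D_c) sees.
   By (D_c) the portfolios S_s(w) and S_s(w') differ coordinatewise by at most c(s+1)D, which by
   (L_eps) is the fraction c'm(s+1)^3 D of each coordinate of S_s(w); so every one-period return
   grows by a factor at most 1 + c'mt^3 D and the wealth R_t by at most exp(c'mt^4 D).  Each damping
   factor satisfies f(b) <= exp(Gamma |a - b|) f(a), so the damping product grows by at most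
   exp(Gamma k l delta).  With delta = delta'_t(nu) both exponents are at most nu/6 as soon as
   c'mt^4 >= 2, and exp(nu/3) <= 1 + nu for nu <= 2. *)

lemma prod_le_power_card_mult_prod:
  fixes f g :: "'a \<Rightarrow> 'b :: linordered_idom"
  assumes "\<And>x. x \<in> A \<Longrightarrow> 0 \<le> f x" and "\<And>x. x \<in> A \<Longrightarrow> f x \<le> c * g x"
  shows "prod f A \<le> c ^ card A * prod g A"
proof -
  have "prod f A \<le> (\<Prod>x\<in>A. c * g x)"
    using assms by (intro prod_mono) auto
  then show ?thesis
    by (simp add: prod.distrib)
qed

lemma sum_mult_le_of_perturbation:
  fixes p q x :: "'a \<Rightarrow> real"
  assumes "\<And>i. i \<in> A \<Longrightarrow> 0 \<le> x i" and "\<And>i. i \<in> A \<Longrightarrow> L \<le> p i"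
    and "\<And>i. i \<in> A \<Longrightarrow> \<bar>p i - q i\<bar> \<le> a * L" and "0 \<le> a"
  shows "(\<Sum>i\<in>A. q i * x i) \<le> (1 + a) * (\<Sum>i\<in>A. p i * x i)"
  unfolding sum_distrib_left
proof (rule sum_mono)
  fix i assume i: "i \<in> A"
  have "q i \<le> p i + a * L" using assms(3)[OF i] by linarith
  also have "\<dots> \<le> (1 + a) * p i" using mult_left_mono[OF assms(2)[OF i] assms(4)] by argo
  finally show "q i * x i \<le> (1 + a) * (p i * x i)"
    using assms(1)[OF i] by (metis mult.assoc mult_right_mono)
qed

lemma exp_third_le_one_plus:
  fixes \<nu> :: real
  assumes "0 \<le> \<nu>" "\<nu> \<le> 2"
  shows "exp (\<nu> / 3) \<le> 1 + \<nu>"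
proof -
  have "1 - \<nu> / 3 \<le> exp (- (\<nu> / 3))"
    using exp_ge_add_one_self[of "- (\<nu> / 3)"] by simp
  then have "exp (\<nu> / 3) \<le> 1 / (1 - \<nu> / 3)"
    using assms by (simp add: exp_minus field_simps)
  also have "\<dots> \<le> 1 + \<nu>"
    using assms mult_nonneg_nonneg[of \<nu> "2 - \<nu>"] by (simp add: field_simps)
  finally show ?thesis .
qed

lemma mult_power4_nonpos_or_ge_two:
  fixes a :: real
  assumes "1 \<le> t" and "2 / a \<le> real t"
  shows "a * real t ^ 4 \<le> 0 \<or> 2 \<le> a * real t ^ 4"
proof (cases "a \<le> 0")
  case True
  then show ?thesis by (simp add: mult_nonpos_nonneg)
next
  case False
  then have "2 \<le> a * real t"
    using assms(2) by (simp add: divide_le_eq mult.commute)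
  also have "\<dots> \<le> a * real t ^ 4"
    using False assms(1) by (intro mult_left_mono) (auto simp: self_le_power)
  finally show ?thesis ..
qed

lemma damp_pos: "0 < damp \<Gamma> \<sigma> a"
  by (simp add: damp_def)

lemma damp_le_exp_mult_damp:
  assumes "\<bar>a - b\<bar> \<le> d" and "0 \<le> \<Gamma>"
  shows "damp \<Gamma> \<sigma> b \<le> exp (\<Gamma> * d) * damp \<Gamma> \<sigma> a"
proof -
  have "min (b - \<sigma>) 0 \<le> d + min (a - \<sigma>) 0"
    using assms(1) by (auto simp: min_def abs_le_iff)
  then have "\<Gamma> * min (b - \<sigma>) 0 \<le> \<Gamma> * d + \<Gamma> * min (a - \<sigma>) 0"
    using mult_left_mono[OF _ assms(2)] by (fastforce simp: distrib_left)
  then show ?thesis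
    by (simp add: damp_def flip: exp_add)
qed

lemma prod_damp_le_exp_mult:
  assumes "\<forall>i\<in>{1..l}. \<forall>j\<in>{1..k}. \<bar>w i j - w' i j\<bar> \<le> \<delta>" and "0 \<le> \<Gamma>"
  shows "(\<Prod>i=1..l. \<Prod>j=1..k. damp \<Gamma> \<sigma> (w' i j))
    \<le> exp (\<Gamma> * (real l * real k * \<delta>)) * (\<Prod>i=1..l. \<Prod>j=1..k. damp \<Gamma> \<sigma> (w i j))"
proof -
  have row: "(\<Prod>j=1..k. damp \<Gamma> \<sigma> (w' i j)) \<le> exp (\<Gamma> * \<delta>) ^ k * (\<Prod>j=1..k. damp \<Gamma> \<sigma> (w i j))"
    if "i \<in> {1..l}" for i
    using prod_le_power_card_mult_prod[of "{1..k}" "\<lambda>j. damp \<Gamma> \<sigma> (w' i j)"]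
      damp_le_exp_mult_damp assms that by (simp add: less_imp_le[OF damp_pos])
  have "(\<Prod>i=1..l. \<Prod>j=1..k. damp \<Gamma> \<sigma> (w' i j))
      \<le> (exp (\<Gamma> * \<delta>) ^ k) ^ l * (\<Prod>i=1..l. \<Prod>j=1..k. damp \<Gamma> \<sigma> (w i j))"
    using prod_le_power_card_mult_prod[of "{1..l}" "\<lambda>i. \<Prod>j=1..k. damp \<Gamma> \<sigma> (w' i j)", OF _ row]
    by (simp add: prod_nonneg less_imp_le[OF damp_pos])
  also have "(exp (\<Gamma> * \<delta>) ^ k) ^ l = exp (\<Gamma> * (real l * real k * \<delta>))"
    by (simp add: ac_simps flip: exp_of_nat_mult power_mult)
  finally show ?thesis .
qed

definition param_dist :: "nat \<Rightarrow> nat \<Rightarrow> (nat \<Rightarrow> nat \<Rightarrow> real) \<Rightarrow> (nat \<Rightarrow> nat \<Rightarrow> real) \<Rightarrow> real" where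
  "param_dist k l w w' = (\<Sum>\<iota>=1..l. \<Sum>j=1..k-1. \<bar>w \<iota> j - w' \<iota> j\<bar>)"

lemma param_dist_nonneg: "0 \<le> param_dist k l w w'"
  by (simp add: param_dist_def sum_nonneg)

lemma param_dist_le:
  assumes "\<forall>i\<in>{1..l}. \<forall>j\<in>{1..k}. \<bar>w i j - w' i j\<bar> \<le> \<delta>"
  shows "param_dist k l w w' \<le> real l * real k * \<delta>"
proof -
  have "param_dist k l w w' \<le> (\<Sum>i=1..l. \<Sum>j=1..k. \<bar>w i j - w' i j\<bar>)"
    unfolding param_dist_def by (intro sum_mono sum_mono2) auto
  also have "\<dots> \<le> (\<Sum>i=1..l. real k * \<delta>)"
    using assms by (intro sum_mono order.trans[OF sum_bounded_above]) auto
  finally show ?thesis by simp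
qed

lemma cond_D_param_dist:
  assumes "cond_D m k l c S" and "w \<in> param_space k l" and "w' \<in> param_space k l" and "i \<in> {1..m}"
  shows "\<bar>S t w i - S t w' i\<bar> \<le> c * (real t + 1) * param_dist k l w w'"
  using assms by (simp add: cond_D_def param_dist_def)

lemma cond_D_rate_nonneg:
  assumes "0 < m" and "0 < \<epsilon>" and "cond_D m k l c S" and "w \<in> param_space k l" and "w' \<in> param_space k l"
  shows "0 \<le> 2 * c / \<epsilon> * real m * param_dist k l w w'"
proof -
  have "0 \<le> c * param_dist k l w w'"
    using cond_D_param_dist[OF assms(3-5), where i=1 and t=0] assms(1) by simp
  then have "0 \<le> c * param_dist k l w w' * (2 * real m / \<epsilon>)"
    using assms(2) by simp
  then show ?thesis
    by (simp add: ac_simps)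
qed

lemma period_return_nonneg:
  assumes "cond_L m k l \<epsilon> S" and "0 \<le> \<epsilon>" and "market m x" and "v \<in> param_space k l"
  shows "0 \<le> (\<Sum>i=1..m. S s v i * x s i)"
proof (intro sum_nonneg mult_nonneg_nonneg)
  fix i assume i: "i \<in> {1..m}"
  have "0 \<le> \<epsilon> / (2 * real m * (real s + 1)^2)"
    using assms(2) by simp
  also have "\<dots> \<le> S s v i"
    using assms(1,4) i by (simp add: cond_L_def)
  finally show "0 \<le> S s v i" .
  show "0 \<le> x s i"
    using assms(3) i by (simp add: market_def less_imp_le)
qed

lemma wealth_nonneg:
  assumes "cond_L m k l \<epsilon> S" and "0 \<le> \<epsilon>" and "market m x" and "v \<in> param_space k l"
  shows "0 \<le> wealth m S x t v"
  unfolding wealth_def using period_return_nonneg[OF assms] by (rule prod_nonneg)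

lemma damped_wealth_nonneg:
  assumes "cond_L m k l \<epsilon> S" and "0 \<le> \<epsilon>" and "market m x" and "v \<in> param_space k l"
  shows "0 \<le> damped_wealth m k l \<Gamma> \<sigma> S x t v"
  unfolding damped_wealth_def using wealth_nonneg[OF assms] damp_pos
  by (intro mult_nonneg_nonneg prod_nonneg) (auto intro: less_imp_le)

lemma period_return_le:
  assumes "0 < m" and "0 < \<epsilon>" and "cond_L m k l \<epsilon> S" and "cond_D m k l c S" and "market m x"
    and "w \<in> param_space k l" and "w' \<in> param_space k l"
  shows "(\<Sum>i=1..m. S s w' i * x s i)
    \<le> (1 + 2 * c / \<epsilon> * real m * param_dist k l w w' * (real s + 1) ^ 3) * (\<Sum>i=1..m. S s w i * x s i)"
proof (rule sum_mult_le_of_perturbation)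
  let ?L = "\<epsilon> / (2 * real m * (real s + 1)^2)"
  show "0 \<le> 2 * c / \<epsilon> * real m * param_dist k l w w' * (real s + 1) ^ 3"
    using cond_D_rate_nonneg[OF assms(1,2,4,6,7)] by (rule mult_nonneg_nonneg) simp
  fix i assume i: "i \<in> {1..m}"
  show "0 \<le> x s i" using assms(5) i by (simp add: market_def less_imp_le)
  show "?L \<le> S s w i" using assms(3,6) i by (simp add: cond_L_def)
  have scale: "c * (real s + 1) * param_dist k l w w'
      = 2 * c / \<epsilon> * real m * param_dist k l w w' * (real s + 1) ^ 3 * ?L"
  proof -
    have "c * u * d = 2 * c / \<epsilon> * real m * d * u ^ 3 * (\<epsilon> / (2 * real m * u^2))"
      if "0 < u" for u d :: real
      using assms(1,2) that by (simp add: field_simps power2_eq_square power3_eq_cube)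
    then show ?thesis by simp
  qed
  show "\<bar>S s w i - S s w' i\<bar> \<le> 2 * c / \<epsilon> * real m * param_dist k l w w' * (real s + 1) ^ 3 * ?L"
    unfolding scale[symmetric] by (rule cond_D_param_dist[OF assms(4,6,7) i])
qed

lemma wealth_le_exp_mult:
  assumes "0 < m" and "0 < \<epsilon>" and "cond_L m k l \<epsilon> S" and "cond_D m k l c S" and "market m x"
    and "w \<in> param_space k l" and "w' \<in> param_space k l"
  shows "wealth m S x t w' \<le> exp (2 * c / \<epsilon> * real m * real t ^ 4 * param_dist k l w w') * wealth m S x t w"
proof -
  define \<kappa> where "\<kappa> = 2 * c / \<epsilon> * real m * param_dist k l w w'"
  have \<kappa>_nonneg: "0 \<le> \<kappa>"
    unfolding \<kappa>_def by (rule cond_D_rate_nonneg[OF assms(1,2,4,6,7)])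
  note return_nonneg = period_return_nonneg[OF assms(3) less_imp_le[OF assms(2)] assms(5)]
  have period: "(\<Sum>i=1..m. S s w' i * x s i) \<le> (1 + \<kappa> * real t ^ 3) * (\<Sum>i=1..m. S s w i * x s i)"
    if "s \<in> {..<t}" for s
  proof -
    have "(1 + \<kappa> * (real s + 1) ^ 3) \<le> 1 + \<kappa> * real t ^ 3"
      using that \<kappa>_nonneg by (auto intro!: mult_left_mono power_mono)
    then show ?thesis
      using period_return_le[OF assms, of s, folded \<kappa>_def] return_nonneg[OF assms(6), of s]
      by (meson mult_right_mono order.trans)
  qed
  have "wealth m S x t w' \<le> (1 + \<kappa> * real t ^ 3) ^ t * wealth m S x t w"
    using prod_le_power_card_mult_prod[of "{..<t}", OF return_nonneg[OF assms(7)] period]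
    by (simp add: wealth_def)
  also have "\<dots> \<le> exp (\<kappa> * real t ^ 3) ^ t * wealth m S x t w"
    using \<kappa>_nonneg wealth_nonneg[OF assms(3) less_imp_le[OF assms(2)] assms(5,6)]
    by (intro mult_right_mono power_mono) (auto simp: add_increasing)
  also have "exp (\<kappa> * real t ^ 3) ^ t = exp (2 * c / \<epsilon> * real m * real t ^ 4 * param_dist k l w w')"
    by (simp add: \<kappa>_def ac_simps numeral_eq_Suc flip: exp_of_nat_mult)
  finally show ?thesis .
qed

lemma damped_wealth_le_exp_mult:
  assumes "0 < m" and "0 < \<epsilon>" and "cond_L m k l \<epsilon> S" and "cond_D m k l c S" and "market m x"
    and "w \<in> param_space k l" and "w' \<in> param_space k l"
    and "\<forall>i\<in>{1..l}. \<forall>j\<in>{1..k}. \<bar>w i j - w' i j\<bar> \<le> \<delta>" and "0 \<le> \<Gamma>"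
  shows "damped_wealth m k l \<Gamma> \<sigma> S x t w'
    \<le> exp (2 * c / \<epsilon> * real m * real t ^ 4 * param_dist k l w w' + \<Gamma> * (real l * real k * \<delta>))
      * damped_wealth m k l \<Gamma> \<sigma> S x t w"
proof -
  have "damped_wealth m k l \<Gamma> \<sigma> S x t w'
      \<le> (exp (2 * c / \<epsilon> * real m * real t ^ 4 * param_dist k l w w') * wealth m S x t w)
        * (exp (\<Gamma> * (real l * real k * \<delta>)) * (\<Prod>i=1..l. \<Prod>j=1..k. damp \<Gamma> \<sigma> (w i j)))"
    unfolding damped_wealth_def
    using wealth_le_exp_mult[OF assms(1-7), of t] prod_damp_le_exp_mult[OF assms(8,9), of \<sigma>]
      wealth_nonneg[OF assms(3) less_imp_le[OF assms(2)] assms(5,6), of t]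
    by (intro mult_mono) (auto intro!: prod_nonneg less_imp_le[OF damp_pos])
  then show ?thesis
    by (simp add: damped_wealth_def exp_add mult_ac)
qed

lemma perturbation_exponent_le:
  fixes X D n \<delta> \<nu> \<Gamma> :: real
  assumes "0 \<le> D" and "D \<le> n * \<delta>" and "0 \<le> n" and "0 < \<nu>" and "2 \<le> \<Gamma>"
    and "X \<le> 0 \<or> 2 \<le> X" and "\<delta> = \<nu> / (3 * \<Gamma> * X * n)"
  shows "X * D + \<Gamma> * (n * \<delta>) \<le> \<nu> / 3"
  using assms(6)
proof
  assume "X \<le> 0"
  then have "\<delta> \<le> 0"
    using assms(3-5,7) by (simp add: divide_nonneg_nonpos mult_nonpos_nonneg)
  then have "\<Gamma> * (n * \<delta>) \<le> 0"
    using assms(3,5) by (simp add: mult_nonneg_nonpos)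
  moreover have "X * D \<le> 0"
    using \<open>X \<le> 0\<close> assms(1) by (simp add: mult_nonpos_nonneg)
  ultimately show ?thesis
    using assms(4) by linarith
next
  assume X: "2 \<le> X"
  show ?thesis
  proof (cases "n = 0")
    case True
    then show ?thesis using assms X by simp
  next
    case False
    have "X * D \<le> X * (n * \<delta>)"
      using X assms(2) by (intro mult_left_mono) auto
    also have "\<dots> = \<nu> / (3 * \<Gamma>)"
      using X False assms(5,7) by simp
    also have "\<dots> \<le> \<nu> / 6"
      using assms(4,5) by (intro divide_left_mono) auto
    finally have "X * D \<le> \<nu> / 6" .
    moreover have "\<Gamma> * (n * \<delta>) \<le> \<nu> / 6"
    proof -
      have "\<Gamma> * (n * \<delta>) = \<nu> / (3 * X)"
        using X False assms(5,7) by simp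
      also have "\<dots> \<le> \<nu> / 6"
        using X assms(4) by (intro divide_left_mono) auto
      finally show ?thesis .
    qed
    ultimately show ?thesis by simp
  qed
qed

lemma damped_wealth_le_one_plus:
  fixes \<nu> c' :: real
  assumes "0 < m" and "0 < \<nu>" and "\<nu> \<le> 2" and "0 < \<epsilon>" and "c' = 2 * c / \<epsilon>" and "2 \<le> \<Gamma>"
    and "cond_L m k l \<epsilon> S" and "cond_D m k l c S" and "market m x"
    and "w \<in> param_space k l" and "w' \<in> param_space k l"
    and "c' * real m * real t ^ 4 \<le> 0 \<or> 2 \<le> c' * real m * real t ^ 4"
    and close: "\<forall>i\<in>{1..l}. \<forall>j\<in>{1..k}.
      \<bar>w i j - w' i j\<bar> \<le> \<nu> / (3 * \<Gamma> * c' * real m * real t ^ 4 * real k * real l)"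
  shows "damped_wealth m k l \<Gamma> \<sigma> S x t w' \<le> (1 + \<nu>) * damped_wealth m k l \<Gamma> \<sigma> S x t w"
proof -
  let ?\<delta> = "\<nu> / (3 * \<Gamma> * c' * real m * real t ^ 4 * real k * real l)"
  have exponent: "c' * real m * real t ^ 4 * param_dist k l w w' + \<Gamma> * (real l * real k * ?\<delta>) \<le> \<nu> / 3"
    using assms(2,6,12) param_dist_nonneg param_dist_le[OF close]
    by (intro perturbation_exponent_le) (auto simp: ac_simps)
  note F_nonneg = damped_wealth_nonneg[OF assms(7) less_imp_le[OF assms(4)] assms(9,10)]
  have "damped_wealth m k l \<Gamma> \<sigma> S x t w'
      \<le> exp (c' * real m * real t ^ 4 * param_dist k l w w' + \<Gamma> * (real l * real k * ?\<delta>))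
        * damped_wealth m k l \<Gamma> \<sigma> S x t w"
    using damped_wealth_le_exp_mult[OF assms(1,4,7-11) close] assms(5,6) by simp
  also have "\<dots> \<le> exp (\<nu> / 3) * damped_wealth m k l \<Gamma> \<sigma> S x t w"
    using exponent F_nonneg by (intro mult_right_mono) auto
  also have "\<dots> \<le> (1 + \<nu>) * damped_wealth m k l \<Gamma> \<sigma> S x t w"
    using exp_third_le_one_plus assms(2,3) F_nonneg by (intro mult_right_mono) auto
  finally show ?thesis .
qed

theorem mainTheorem13:
  fixes m :: nat and \<nu> c' :: real
  assumes "m \<ge> 2" and "0 < \<nu>" and "\<nu> \<le> 2"
  shows "\<exists>t0::nat. \<forall>(k::nat) (l::nat) S (\<epsilon>::real) (c::real) (\<sigma>::real) (\<Gamma>::real).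
     (0 < \<epsilon> \<and> \<epsilon> < 1 \<and> c' = 2 * c / \<epsilon> \<and> 0 < \<sigma> \<and> \<Gamma> \<ge> 2 \<and>
      strategy m k l S \<and> cond_L m k l \<epsilon> S \<and> cond_D m k l c S) \<longrightarrow>
     (\<forall>t\<ge>t0. \<forall>x. market m x \<longrightarrow>
        (\<forall>w\<in>param_space k l. \<forall>w'\<in>param_space k l.
          (\<forall>i\<in>{1..l}. \<forall>j\<in>{1..k}.
             \<bar>w i j - w' i j\<bar> \<le> \<nu> / (3 * \<Gamma> * c' * real m * real t ^ 4 * real k * real l)) \<longrightarrow>
          damped_wealth m k l \<Gamma> \<sigma> S x t w / (1 + \<nu>) \<le> damped_wealth m k l \<Gamma> \<sigma> S x t w' \<and>
          damped_wealth m k l \<Gamma> \<sigma> S x t w' \<le> (1 + \<nu>) * damped_wealth m k l \<Gamma> \<sigma> S x t w))"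
proof (intro exI[of _ "nat \<lceil>2 / (c' * real m)\<rceil> + 1"] allI impI ballI conjI)
  fix k l :: nat and S and \<epsilon> c \<sigma> \<Gamma> :: real and t :: nat and x w w'
  assume H: "0 < \<epsilon> \<and> \<epsilon> < 1 \<and> c' = 2 * c / \<epsilon> \<and> 0 < \<sigma> \<and> \<Gamma> \<ge> 2 \<and>
      strategy m k l S \<and> cond_L m k l \<epsilon> S \<and> cond_D m k l c S"
    and t: "nat \<lceil>2 / (c' * real m)\<rceil> + 1 \<le> t" and x: "market m x"
    and w: "w \<in> param_space k l" and w': "w' \<in> param_space k l"
    and close: "\<forall>i\<in>{1..l}. \<forall>j\<in>{1..k}.
      \<bar>w i j - w' i j\<bar> \<le> \<nu> / (3 * \<Gamma> * c' * real m * real t ^ 4 * real k * real l)"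
  have m: "0 < m" using assms(1) by simp
  have scale: "c' * real m * real t ^ 4 \<le> 0 \<or> 2 \<le> c' * real m * real t ^ 4"
    using t real_nat_ceiling_ge[of "2 / (c' * real m)"] by (intro mult_power4_nonpos_or_ge_two) auto
  have close': "\<forall>i\<in>{1..l}. \<forall>j\<in>{1..k}.
      \<bar>w' i j - w i j\<bar> \<le> \<nu> / (3 * \<Gamma> * c' * real m * real t ^ 4 * real k * real l)"
    using close by (simp add: abs_minus_commute)
  show "damped_wealth m k l \<Gamma> \<sigma> S x t w' \<le> (1 + \<nu>) * damped_wealth m k l \<Gamma> \<sigma> S x t w"
    using damped_wealth_le_one_plus[OF m assms(2,3) _ _ _ _ _ x w w' scale close] H by blast
  have "damped_wealth m k l \<Gamma> \<sigma> S x t w \<le> (1 + \<nu>) * damped_wealth m k l \<Gamma> \<sigma> S x t w'"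
    using damped_wealth_le_one_plus[OF m assms(2,3) _ _ _ _ _ x w' w scale close'] H by blast
  then show "damped_wealth m k l \<Gamma> \<sigma> S x t w / (1 + \<nu>) \<le> damped_wealth m k l \<Gamma> \<sigma> S x t w'"
    using assms(2) by (simp add: divide_le_eq mult.commute)
qed

end
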